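(* Let $s\ge1$, let $F_1,\ldots,F_N$ be distribution functions on $\mathbb{R}^s$ with finite second moments, for ${\bf s}=\{i_1,\ldots,i_m\}\subset\{1,\ldots,N\}$ let $F_{\bf s}=F_{i_1}\ast\cdots\ast F_{i_m}$, and let $F=F_1\ast\cdots\ast F_N$. Let $t_{{\bf s},n}$ be the Pitman estimator of $\theta\in\mathbb{R}^s$ from a sample of size $n$ from $F_{\bf s}(x-\theta)$ and $t_n$ that from a sample of size $n$ from $F(x-\theta)$. Then for any $n\ge1$ and $1\le m\le N$, $$\mathrm{var}(t_n)\ \ge\ \frac{1}{\binom{N-1}{m-1}}\sum_{\bf s}\mathrm{var}(t_{{\bf s},n}),$$ where $\mathrm{var}$ denotes the covariance matrix, $A\ge B$ means $A-B$ is nonnegative definite, and the sum is over all subsets ${\bf s}$ of $\{1,\ldots,N\}$ with exactly $m$ elements.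
   Context: A sample of size $n$ from $G(x-\theta)$ is $x_1,\ldots,x_n$ i.i.d. in $\mathbb{R}^s$ with $x_i-\theta\sim G$. An estimator $t$ is equivariant if $t(x_1+c,\ldots,x_n+c)=t(x_1,\ldots,x_n)+c$ for all $c\in\mathbb{R}^s$. The Pitman estimator is the equivariant estimator whose covariance matrix is minimal in the Loewner order among equivariant estimators; it equals $\bar x-E_0(\bar x\mid x_1-\bar x,\ldots,x_n-\bar x)$, with $E_0$ expectation under $\theta=0$. Convolution of distributions on $\mathbb{R}^s$ is the distribution of the sum of independent random vectors. *)

theory Defs
  imports "HOL-Probability.Probability"
begin

text \<open>A distribution on R^s (here an abstract euclidean space 'a, s = DIM('a) \<ge> 1)
  is a Borel probability measure; finite second moments.\<close>
definition distr_2nd :: "'a::euclidean_space measure \<Rightarrow> bool" where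
  "distr_2nd G \<longleftrightarrow> prob_space G \<and> sets G = sets borel \<and> integrable G (\<lambda>x. norm x ^ 2)"

definition conv_set :: "(nat \<Rightarrow> 'a::euclidean_space measure) \<Rightarrow> nat set \<Rightarrow> 'a measure" where
  "conv_set F S = distr (PiM S F) borel (\<lambda>x. \<Sum>i\<in>S. x i)"

text \<open>Law of a sample x_1..x_n (indices 0..n-1) i.i.d. from G(x - \<theta>).\<close>
definition sample_law :: "'a::euclidean_space measure \<Rightarrow> nat \<Rightarrow> 'a \<Rightarrow> (nat \<Rightarrow> 'a) measure" where
  "sample_law G n \<theta> = PiM {..<n} (\<lambda>_. distr G borel (\<lambda>x. x + \<theta>))"

definition equivariant :: "nat \<Rightarrow> ((nat \<Rightarrow> 'a::euclidean_space) \<Rightarrow> 'a) \<Rightarrow> bool" where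
  "equivariant n t \<longleftrightarrow> t \<in> borel_measurable (PiM {..<n} (\<lambda>_. borel)) \<and>
     (\<forall>x\<in>extensional {..<n}. \<forall>c. t (restrict (\<lambda>i. x i + c) {..<n}) = t x + c)"

text \<open>Quadratic form of the covariance matrix of t under M, evaluated at u:
  u^T cov(t) u = var (u \<bullet> t).\<close>
definition cov_form :: "'b measure \<Rightarrow> ('b \<Rightarrow> 'a::euclidean_space) \<Rightarrow> 'a \<Rightarrow> real" where
  "cov_form M t u = (\<integral>x. (u \<bullet> t x - (\<integral>y. u \<bullet> t y \<partial>M)) ^ 2 \<partial>M)"

definition has_2nd :: "'b measure \<Rightarrow> ('b \<Rightarrow> 'a::euclidean_space) \<Rightarrow> bool" where
  "has_2nd M t \<longleftrightarrow> integrable M (\<lambda>x. norm (t x) ^ 2)"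

definition is_pitman :: "'a::euclidean_space measure \<Rightarrow> nat \<Rightarrow> ((nat \<Rightarrow> 'a) \<Rightarrow> 'a) \<Rightarrow> bool" where
  "is_pitman G n t \<longleftrightarrow> equivariant n t \<and> (\<forall>\<theta>. has_2nd (sample_law G n \<theta>) t) \<and>
     (\<forall>t'. equivariant n t' \<and> (\<forall>\<theta>. has_2nd (sample_law G n \<theta>) t') \<longrightarrow>
        (\<forall>\<theta> u. cov_form (sample_law G n \<theta>) t u \<le> cov_form (sample_law G n \<theta>) t' u))"

end

theory Submission
  imports Defs
begin

text \<open>Realise a sample from \<open>F\<^sub>1 * \<dots> * F\<^sub>N\<close> as \<open>x\<^sub>j = \<theta> + \<Sum>\<^sub>i \<omega>(i, j)\<close> with independent
  \<open>\<omega>(i, j) \<sim> F\<^sub>i\<close>.  Averaging the Pitman estimator \<open>t\<close> over the summands \<open>\<omega>(i, j)\<close>, \<open>i \<notin> S\<close>,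
  gives an equivariant estimator from a sample of \<open>F\<^sub>S\<close>; hence, by minimality,
  \<open>var (u \<bullet> t\<^sub>S\<^sub>,\<^sub>n)\<close> is at most the variance of \<open>E[h | \<omega> on S]\<close> for \<open>h = u \<bullet> t\<close>.

  Put \<open>\<psi> R = E[E[h | R]\<^sup>2]\<close>.  The identity \<open>E[E[h | R] E[h | R']] = E[E[h | R \<inter> R']\<^sup>2]\<close> makes
  the Moebius transform of \<open>\<psi>\<close> at \<open>T\<close> equal to \<open>E[(\<Sum>\<^sub>R\<^sub>\<subseteq>\<^sub>T \<plusminus>E[h | R])\<^sup>2] \<ge> 0\<close>, and
  \<open>var E[h | S] = \<psi> S - \<psi> {}\<close> is the sum of these transforms over the nonempty \<open>T \<subseteq> S\<close>.  As
  every nonempty \<open>T\<close> lies in at most \<open>(N - 1) choose (m - 1)\<close> sets \<open>S\<close> of size \<open>m\<close>, the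
  variances \<open>var E[h | S]\<close> sum to at most \<open>(N - 1) choose (m - 1)\<close> times \<open>var h\<close>.\<close>

section \<open>Moebius transforms of set functions\<close>

definition set_moebius :: "('s set \<Rightarrow> real) \<Rightarrow> 's set \<Rightarrow> real" where
  "set_moebius \<psi> T = (\<Sum>R\<in>Pow T. (-1) ^ card (T - R) * \<psi> R)"

lemma set_moebius_empty [simp]: "set_moebius \<psi> {} = \<psi> {}"
  by (simp add: set_moebius_def)

lemma sum_Pow_insert:
  assumes "finite T" "a \<notin> T"
  shows "(\<Sum>R\<in>Pow (insert a T). g R) = (\<Sum>R\<in>Pow T. g R) + (\<Sum>R\<in>Pow T. g (insert a R))"
proof -
  have "inj_on (insert a) (Pow T)"
    using assms(2) by (intro inj_onI) (metis Diff_insert_absorb PowD subsetD)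
  then show ?thesis
    unfolding Pow_insert using assms
    by (subst sum.union_disjoint) (auto simp: sum.reindex)
qed

lemma set_moebius_insert:
  assumes "finite T" "a \<notin> T"
  shows "set_moebius \<psi> (insert a T) = set_moebius (\<lambda>R. \<psi> (insert a R)) T - set_moebius \<psi> T"
proof -
  have sign: "(-1::real) ^ card (insert a T - R) = - ((-1) ^ card (T - R))" if "R \<subseteq> T" for R
  proof -
    have "insert a T - R = insert a (T - R)" "a \<notin> T - R" using that assms(2) by auto
    then show ?thesis using assms(1) by simp
  qed
  have "set_moebius \<psi> (insert a T) = (\<Sum>R\<in>Pow T. (-1) ^ card (insert a T - R) * \<psi> R)
      + (\<Sum>R\<in>Pow T. (-1) ^ card (insert a T - insert a R) * \<psi> (insert a R))"
    unfolding set_moebius_def by (rule sum_Pow_insert[OF assms])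
  also have "\<dots> = - set_moebius \<psi> T + set_moebius (\<lambda>R. \<psi> (insert a R)) T"
    unfolding set_moebius_def sum_negf[symmetric] using assms(2)
    by (intro arg_cong2[where f = "(+)"] sum.cong refl) (auto simp: sign Diff_insert_absorb)
  finally show ?thesis by simp
qed

lemma sum_set_moebius_Pow:
  assumes "finite S"
  shows "(\<Sum>T\<in>Pow S. set_moebius \<psi> T) = \<psi> S"
  using assms
proof (induction S arbitrary: \<psi> rule: finite_induct)
  case empty
  then show ?case by simp
next
  case (insert a S)
  have "(\<Sum>T\<in>Pow (insert a S). set_moebius \<psi> T)
      = (\<Sum>T\<in>Pow S. set_moebius \<psi> T) + (\<Sum>T\<in>Pow S. set_moebius \<psi> (insert a T))"
    by (rule sum_Pow_insert[OF insert.hyps])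
  also have "(\<Sum>T\<in>Pow S. set_moebius \<psi> (insert a T))
      = (\<Sum>T\<in>Pow S. set_moebius (\<lambda>R. \<psi> (insert a R)) T) - (\<Sum>T\<in>Pow S. set_moebius \<psi> T)"
    unfolding sum_subtractf[symmetric] using insert.hyps
    by (intro sum.cong refl set_moebius_insert) (auto dest: finite_subset)
  finally show ?case
    by (simp add: insert.IH)
qed

lemma set_moebius_eq_0:
  assumes "finite T" "k \<in> T" "\<And>R. R \<subseteq> T - {k} \<Longrightarrow> \<psi> (insert k R) = \<psi> R"
  shows "set_moebius \<psi> T = 0"
proof -
  have "set_moebius \<psi> T
      = set_moebius (\<lambda>R. \<psi> (insert k R)) (T - {k}) - set_moebius \<psi> (T - {k})"
    using set_moebius_insert[of "T - {k}" k \<psi>] assms by (simp add: insert_absorb)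
  also have "set_moebius (\<lambda>R. \<psi> (insert k R)) (T - {k}) = set_moebius \<psi> (T - {k})"
    unfolding set_moebius_def by (rule sum.cong) (auto simp: assms(3))
  finally show ?thesis by simp
qed

lemma set_moebius_eq_double_sum_inter:
  assumes "finite T"
  shows "set_moebius \<psi> T
    = (\<Sum>R\<in>Pow T. \<Sum>R'\<in>Pow T. ((-1) ^ card (T - R) * (-1) ^ card (T - R')) * \<psi> (R \<inter> R'))"
proof -
  have vanish: "set_moebius (\<lambda>R'. \<psi> (R \<inter> R')) T = 0" if "R \<in> Pow T - {T}" for R
  proof -
    from that obtain k where "k \<in> T" "k \<notin> R" by blast
    then show ?thesis
      by (intro set_moebius_eq_0[OF assms]) (auto intro!: arg_cong[where f = \<psi>])
  qed
  have "(\<Sum>R\<in>Pow T. \<Sum>R'\<in>Pow T. ((-1) ^ card (T - R) * (-1) ^ card (T - R')) * \<psi> (R \<inter> R'))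
      = (\<Sum>R\<in>Pow T. (-1) ^ card (T - R) * set_moebius (\<lambda>R'. \<psi> (R \<inter> R')) T)"
    unfolding set_moebius_def sum_distrib_left by (simp add: mult.assoc)
  also have "\<dots> = set_moebius (\<lambda>R'. \<psi> (T \<inter> R')) T"
    using assms vanish by (subst sum.remove[of _ T]) auto
  also have "\<dots> = set_moebius \<psi> T"
    unfolding set_moebius_def by (rule sum.cong) (auto intro!: arg_cong[where f = \<psi>])
  finally show ?thesis ..
qed

lemma card_subsets_containing:
  assumes "finite I" "k \<in> I" "1 \<le> m"
  shows "card {S. S \<subseteq> I \<and> card S = m \<and> k \<in> S} = (card I - 1) choose (m - 1)"
proof -
  have "{S. S \<subseteq> I \<and> card S = m \<and> k \<in> S} = insert k ` {S. S \<subseteq> I - {k} \<and> card S = m - 1}"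
  proof (intro equalityI subsetI)
    fix S assume "S \<in> {S. S \<subseteq> I \<and> card S = m \<and> k \<in> S}"
    then have "S = insert k (S - {k})" "S - {k} \<subseteq> I - {k}" "card (S - {k}) = m - 1"
      using assms by (auto simp: finite_subset)
    then show "S \<in> insert k ` {S. S \<subseteq> I - {k} \<and> card S = m - 1}" by blast
  next
    fix S' assume "S' \<in> insert k ` {S. S \<subseteq> I - {k} \<and> card S = m - 1}"
    then obtain S where S: "S \<subseteq> I - {k}" "card S = m - 1" and S': "S' = insert k S" by auto
    then have "finite S" "k \<notin> S" using assms by (auto dest: finite_subset)
    then show "S' \<in> {S. S \<subseteq> I \<and> card S = m \<and> k \<in> S}" using S S' assms by auto
  qed
  moreover have "inj_on (insert k) {S. S \<subseteq> I - {k} \<and> card S = m - 1}"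
    by (intro inj_onI) (metis (no_types, lifting) Diff_insert_absorb mem_Collect_eq subset_Diff_insert)
  ultimately show ?thesis
    using assms by (simp add: card_image n_subsets)
qed

text \<open>Each \<open>\<psi> S - \<psi> {}\<close> is the sum of the Moebius transform over the nonempty \<open>T \<subseteq> S\<close>, and
  every nonempty \<open>T\<close> lies in at most \<open>(card I - 1) choose (m - 1)\<close> sets \<open>S\<close> of size \<open>m\<close>.\<close>
lemma sum_subsets_card_le_binomial:
  fixes \<psi> :: "'s set \<Rightarrow> real"
  assumes I: "finite I" and m: "1 \<le> m"
    and nonneg: "\<And>T. T \<subseteq> I \<Longrightarrow> T \<noteq> {} \<Longrightarrow> set_moebius \<psi> T \<ge> 0"
  shows "(\<Sum>S\<in>{S. S \<subseteq> I \<and> card S = m}. \<psi> S - \<psi> {})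
    \<le> real ((card I - 1) choose (m - 1)) * (\<psi> I - \<psi> {})"
proof -
  let ?A = "{S. S \<subseteq> I \<and> card S = m}"
  let ?C = "real ((card I - 1) choose (m - 1))"
  have increment: "\<psi> S - \<psi> {} = (\<Sum>T\<in>{T \<in> Pow I - {{}}. T \<subseteq> S}. set_moebius \<psi> T)"
    if "S \<subseteq> I" for S
  proof -
    have "finite S" using that I by (rule finite_subset)
    then have "\<psi> S = \<psi> {} + (\<Sum>T\<in>Pow S - {{}}. set_moebius \<psi> T)"
      using sum.remove[of "Pow S" "{}" "set_moebius \<psi>"] by (simp add: sum_set_moebius_Pow)
    moreover have "Pow S - {{}} = {T \<in> Pow I - {{}}. T \<subseteq> S}" using that by auto
    ultimately show ?thesis by simp
  qed
  have cover: "real (card {S \<in> ?A. T \<subseteq> S}) \<le> ?C" if T: "T \<in> Pow I - {{}}" for T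
  proof -
    from T obtain k where k: "k \<in> T" by auto
    have "card {S \<in> ?A. T \<subseteq> S} \<le> card {S. S \<subseteq> I \<and> card S = m \<and> k \<in> S}"
      using I k by (intro card_mono) (auto intro: finite_subset[of _ "Pow I"])
    also have "\<dots> = (card I - 1) choose (m - 1)"
      using card_subsets_containing[OF I _ m, of k] that k by auto
    finally show ?thesis by simp
  qed
  have total: "(\<Sum>T\<in>Pow I - {{}}. set_moebius \<psi> T) = \<psi> I - \<psi> {}"
  proof -
    have "{T \<in> Pow I - {{}}. T \<subseteq> I} = Pow I - {{}}" by auto
    then show ?thesis using increment[of I] by (simp only: subset_refl)
  qed
  have "(\<Sum>S\<in>?A. \<psi> S - \<psi> {}) = (\<Sum>S\<in>?A. \<Sum>T\<in>{T \<in> Pow I - {{}}. T \<subseteq> S}. set_moebius \<psi> T)"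
    by (rule sum.cong) (auto simp: increment)
  also have "\<dots> = (\<Sum>T\<in>Pow I - {{}}. real (card {S \<in> ?A. T \<subseteq> S}) * set_moebius \<psi> T)"
    using I by (subst sum.swap_restrict) (auto intro: finite_subset[of _ "Pow I"])
  also have "\<dots> \<le> (\<Sum>T\<in>Pow I - {{}}. ?C * set_moebius \<psi> T)"
    using cover nonneg by (intro sum_mono mult_right_mono) auto
  also have "\<dots> = ?C * (\<psi> I - \<psi> {})"
    by (simp only: sum_distrib_left[symmetric] total)
  finally show ?thesis .
qed

section \<open>Conditional expectations on finite product spaces\<close>

lemma square_norm_integral_le_nn_integral:
  fixes f :: "'x \<Rightarrow> 'c::{banach,second_countable_topology}"
  assumes "prob_space N" and [measurable]: "f \<in> borel_measurable N"
  shows "ennreal (norm (integral\<^sup>L N f) ^ 2) \<le> (\<integral>\<^sup>+z. ennreal (norm (f z) ^ 2) \<partial>N)"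
proof (cases "integrable N f")
  case True
  have "ennreal (norm (integral\<^sup>L N f) ^ 2) = ennreal (norm (integral\<^sup>L N f)) ^ 2"
    by (simp add: ennreal_power)
  also have "\<dots> \<le> (\<integral>\<^sup>+z. ennreal (norm (f z)) * 1 \<partial>N) ^ 2"
    by (simp add: power_mono integral_norm_bound_ennreal True)
  also have "\<dots> \<le> (\<integral>\<^sup>+z. ennreal (norm (f z)) ^ 2 \<partial>N) * (\<integral>\<^sup>+z. 1 ^ 2 \<partial>N)"
    by (rule Cauchy_Schwarz_nn_integral) auto
  also have "\<dots> = (\<integral>\<^sup>+z. ennreal (norm (f z) ^ 2) \<partial>N)"
    using assms(1) by (simp add: ennreal_power prob_space.emeasure_space_1)
  finally show ?thesis .
qed (simp add: not_integrable_integral_eq)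

lemma integrable_mult_of_square_integrable:
  fixes f g :: "'x \<Rightarrow> real"
  assumes [measurable]: "f \<in> borel_measurable M" "g \<in> borel_measurable M"
    and "integrable M (\<lambda>x. f x ^ 2)" "integrable M (\<lambda>x. g x ^ 2)"
  shows "integrable M (\<lambda>x. f x * g x)"
proof (rule Bochner_Integration.integrable_bound[of _ "\<lambda>x. f x ^ 2 + g x ^ 2"])
  have "\<bar>f x * g x\<bar> \<le> f x ^ 2 + g x ^ 2" for x
  proof -
    have "2 * \<bar>f x\<bar> * \<bar>g x\<bar> \<le> f x ^ 2 + g x ^ 2"
      using sum_squares_bound[of "\<bar>f x\<bar>" "\<bar>g x\<bar>"] by (simp add: power2_abs)
    moreover have "0 \<le> \<bar>f x\<bar> * \<bar>g x\<bar>" by simp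
    ultimately show ?thesis unfolding abs_mult by linarith
  qed
  then show "AE x in M. norm (f x * g x) \<le> norm (f x ^ 2 + g x ^ 2)"
    by simp
qed (use assms in simp_all)

lemma (in finite_measure) integrable_of_square_integrable_norm:
  fixes f :: "_ \<Rightarrow> 'b::{banach,second_countable_topology}"
  assumes [measurable]: "f \<in> borel_measurable M" and "integrable M (\<lambda>x. norm (f x) ^ 2)"
  shows "integrable M f"
  using square_integrable_imp_integrable[of "\<lambda>x. norm (f x)"] assms
  by (simp add: integrable_norm_iff)

lemma square_integrable_inner:
  fixes f :: "_ \<Rightarrow> 'a::euclidean_space"
  assumes [measurable]: "f \<in> borel_measurable M" and f2: "integrable M (\<lambda>x. norm (f x) ^ 2)"
  shows "integrable M (\<lambda>x. (u \<bullet> f x) ^ 2)"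
proof (rule Bochner_Integration.integrable_bound[of _ "\<lambda>x. norm u ^ 2 * norm (f x) ^ 2"])
  show "integrable M (\<lambda>x. norm u ^ 2 * norm (f x) ^ 2)" using f2 by simp
  have "(u \<bullet> f x) ^ 2 \<le> (norm u * norm (f x)) ^ 2" for x
    using power_mono[OF Cauchy_Schwarz_ineq2[of u "f x"] abs_ge_zero, of 2] by simp
  then show "AE x in M. norm ((u \<bullet> f x) ^ 2) \<le> norm (norm u ^ 2 * norm (f x) ^ 2)"
    by (simp add: power_mult_distrib)
qed simp

lemma integrable_add_const_iff:
  fixes f :: "_ \<Rightarrow> 'b::{banach,second_countable_topology}"
  assumes "finite_measure Q"
  shows "integrable Q (\<lambda>z. f z + c) \<longleftrightarrow> integrable Q f"
proof
  assume "integrable Q (\<lambda>z. f z + c)"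
  then have "integrable Q (\<lambda>z. (f z + c) - c)"
    using assms by (intro Bochner_Integration.integrable_diff) (auto intro: finite_measure.integrable_const)
  then show "integrable Q f" by simp
qed (use assms in \<open>auto intro: finite_measure.integrable_const\<close>)

lemma merge_merge_Int:
  assumes "R \<subseteq> I" "R' \<subseteq> I"
  shows "merge R (I - R) (merge R' (I - R') (x, z), z')
    = merge (R \<inter> R') (I - R \<inter> R') (x, merge (R - R') (I - R) (restrict z (R - R'), z'))"
  using assms by (auto simp: merge_def fun_eq_iff)

context finite_product_prob_space
begin

lemma prob_space_PiM': "prob_space (PiM B M)"
  by (intro prob_space_PiM M.prob_space_axioms)

definition coord_cond_exp :: "'a set \<Rightarrow> (('a \<Rightarrow> 'b) \<Rightarrow> 'c::{banach,second_countable_topology}) \<Rightarrow> ('a \<Rightarrow> 'b) \<Rightarrow> 'c" where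
  "coord_cond_exp B f x = (\<integral>z. f (merge B (I - B) (x, z)) \<partial>PiM (I - B) M)"

lemma coord_cond_exp_restrict: "coord_cond_exp B f (restrict x B) = coord_cond_exp B f x"
  by (simp add: coord_cond_exp_def)

lemma coord_cond_exp_merge: "coord_cond_exp B f (merge B (I - B) (x, z)) = coord_cond_exp B f x"
proof -
  have "merge B (I - B) (merge B (I - B) (x, z), z') = merge B (I - B) (x, z')" for z'
    by (auto simp: merge_def fun_eq_iff)
  then show ?thesis by (simp add: coord_cond_exp_def)
qed

lemma measurable_merge_compl:
  assumes "B \<subseteq> I"
  shows "merge B (I - B) \<in> measurable (PiM B M \<Otimes>\<^sub>M PiM (I - B) M) (PiM I M)"
  using measurable_merge[of B "I - B" M] assms by (simp add: Un_absorb1)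

lemma measurable_coord_cond_exp_PiM:
  assumes B: "B \<subseteq> I" and [measurable]: "f \<in> borel_measurable (PiM I M)"
  shows "coord_cond_exp B f \<in> borel_measurable (PiM B M)"
proof -
  interpret C: prob_space "PiM (I - B) M" by (rule prob_space_PiM')
  have "(\<lambda>p. f (merge B (I - B) p)) \<in> borel_measurable (PiM B M \<Otimes>\<^sub>M PiM (I - B) M)"
    using measurable_merge_compl[OF B] by measurable
  then show ?thesis unfolding coord_cond_exp_def
    by (intro C.borel_measurable_lebesgue_integral) (simp add: case_prod_beta')
qed

lemma borel_measurable_coord_cond_exp:
  assumes B: "B \<subseteq> I" and f: "f \<in> borel_measurable (PiM I M)"
  shows "coord_cond_exp B f \<in> borel_measurable (PiM I M)"
  using measurable_comp[OF measurable_restrict_subset[OF B] measurable_coord_cond_exp_PiM[OF B f]]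
  by (simp add: comp_def coord_cond_exp_restrict)

lemma distr_restrict_PiM: "B \<subseteq> I \<Longrightarrow> distr (PiM I M) (PiM B M) (\<lambda>x. restrict x B) = PiM B M"
  using distr_restrict[of B I] finite_index by simp

lemma integral_coord_cond_exp_PiM:
  fixes f :: "_ \<Rightarrow> 'c::{banach,second_countable_topology}"
  assumes B: "B \<subseteq> I" and f: "integrable (PiM I M) f"
  shows "(\<integral>x. f x \<partial>PiM I M) = (\<integral>x. coord_cond_exp B f x \<partial>PiM B M)"
  using product_integral_fold[of B "I - B" f] B f finite_index
  by (simp add: coord_cond_exp_def Un_absorb1 finite_subset)

lemma integral_coord_cond_exp:
  fixes f :: "_ \<Rightarrow> 'c::{banach,second_countable_topology}"
  assumes B: "B \<subseteq> I" and f: "integrable (PiM I M) f"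
  shows "(\<integral>x. coord_cond_exp B f x \<partial>PiM I M) = integral\<^sup>L (PiM I M) f"
proof -
  have "(\<integral>x. coord_cond_exp B f x \<partial>PiM I M) = (\<integral>x. coord_cond_exp B f (restrict x B) \<partial>PiM I M)"
    by (simp add: coord_cond_exp_restrict)
  also have "\<dots> = (\<integral>x. coord_cond_exp B f x \<partial>PiM B M)"
    using integral_distr[OF measurable_restrict_subset[OF B]
        measurable_coord_cond_exp_PiM[OF B borel_measurable_integrable[OF f]]]
    by (simp add: distr_restrict_PiM[OF B])
  finally show ?thesis
    using integral_coord_cond_exp_PiM[OF B f] by simp
qed

lemma AE_integrable_merge:
  fixes f :: "_ \<Rightarrow> 'c::{banach,second_countable_topology}"
  assumes B: "B \<subseteq> I" and f: "integrable (PiM I M) f"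
  shows "AE x in PiM I M. integrable (PiM (I - B) M) (\<lambda>z. f (merge B (I - B) (x, z)))"
proof -
  interpret B: finite_product_sigma_finite M B
    by standard (use finite_index B in \<open>auto intro: finite_subset\<close>)
  interpret C: finite_product_sigma_finite M "I - B"
    by standard (use finite_index in auto)
  interpret P: pair_sigma_finite "PiM B M" "PiM (I - B) M" ..
  have "distr (PiM B M \<Otimes>\<^sub>M PiM (I - B) M) (PiM I M) (merge B (I - B)) = PiM I M"
    using distr_merge[of B "I - B"] finite_index B by (simp add: Un_absorb1 finite_subset)
  then have "integrable (PiM B M \<Otimes>\<^sub>M PiM (I - B) M) (\<lambda>p. f (merge B (I - B) p))"
    using integrable_distr[OF measurable_merge_compl[OF B]] f by simp
  then have "AE x in PiM B M. integrable (PiM (I - B) M) (\<lambda>z. f (merge B (I - B) (x, z)))"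
    by (rule P.AE_integrable_fst')
  then have "AE x in distr (PiM I M) (PiM B M) (\<lambda>x. restrict x B).
      integrable (PiM (I - B) M) (\<lambda>z. f (merge B (I - B) (x, z)))"
    by (subst distr_restrict_PiM[OF B])
  from AE_distrD[OF measurable_restrict_subset[OF B] this] show ?thesis
    by simp
qed

lemma square_integrable_coord_cond_exp:
  fixes f :: "_ \<Rightarrow> 'c::{banach,second_countable_topology}"
  assumes B: "B \<subseteq> I" and f[measurable]: "f \<in> borel_measurable (PiM I M)"
    and f2: "integrable (PiM I M) (\<lambda>x. norm (f x) ^ 2)"
  shows "integrable (PiM I M) (\<lambda>x. norm (coord_cond_exp B f x) ^ 2)"
  unfolding integrable_iff_bounded
proof
  interpret C: prob_space "PiM (I - B) M" by (rule prob_space_PiM')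
  note measurable_coord_cond_exp = borel_measurable_coord_cond_exp[OF B f]
  have fold: "(\<integral>\<^sup>+x. g x \<partial>PiM I M)
      = (\<integral>\<^sup>+x. \<integral>\<^sup>+z. g (merge B (I - B) (x, z)) \<partial>PiM (I - B) M \<partial>PiM B M)"
    if "g \<in> borel_measurable (PiM I M)" for g
    using product_nn_integral_fold[of B "I - B" g] B that finite_index
    by (simp add: Un_absorb1 finite_subset)
  have merged: "(\<lambda>z. f (merge B (I - B) (x, z))) \<in> borel_measurable (PiM (I - B) M)"
    if "x \<in> space (PiM B M)" for x
    using measurable_merge_compl[OF B] that by measurable
  show "(\<lambda>x. norm (coord_cond_exp B f x) ^ 2) \<in> borel_measurable (PiM I M)"
    using measurable_coord_cond_exp by measurable
  have "(\<integral>\<^sup>+x. ennreal (norm (norm (coord_cond_exp B f x) ^ 2)) \<partial>PiM I M)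
      = (\<integral>\<^sup>+x. ennreal (norm (coord_cond_exp B f x) ^ 2) \<partial>PiM B M)"
    using measurable_coord_cond_exp by (simp add: fold coord_cond_exp_merge C.emeasure_space_1)
  also have "\<dots> \<le> (\<integral>\<^sup>+x. \<integral>\<^sup>+z. ennreal (norm (f (merge B (I - B) (x, z))) ^ 2) \<partial>PiM (I - B) M \<partial>PiM B M)"
    unfolding coord_cond_exp_def
    by (intro nn_integral_mono square_norm_integral_le_nn_integral C.prob_space_axioms merged)
  also have "\<dots> = (\<integral>\<^sup>+x. ennreal (norm (f x) ^ 2) \<partial>PiM I M)"
    by (simp add: fold)
  also have "\<dots> < \<infinity>"
    using f2 by (simp add: integrable_iff_bounded)
  finally show "(\<integral>\<^sup>+x. ennreal (norm (norm (coord_cond_exp B f x) ^ 2)) \<partial>PiM I M) < \<infinity>" .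
qed

lemma coord_cond_exp_coord_cond_exp:
  fixes h :: "_ \<Rightarrow> 'c::{banach,second_countable_topology}"
  assumes R: "R \<subseteq> I" and R': "R' \<subseteq> I" and h: "integrable (PiM I M) h"
  shows "AE x in PiM I M. coord_cond_exp R' (coord_cond_exp R h) x = coord_cond_exp (R \<inter> R') h x"
  using AE_integrable_merge[OF le_infI1[OF R, of R'] h] AE_space
proof eventually_elim
  case (elim x)
  define A where "A = R \<inter> R'"
  have hm[measurable]: "h \<in> borel_measurable (PiM I M)" using h by auto
  have A: "A \<subseteq> I" using R by (auto simp: A_def)
  have U: "(R - R') \<union> (I - R) = I - A" and D: "(R - R') \<inter> (I - R) = {}"
    using R R' by (auto simp: A_def)
  text \<open>Integrating out \<open>I - R'\<close> after \<open>I - R\<close> integrates out \<open>I - R\<close> first and then, by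
    Fubini, the remaining coordinates \<open>R - R'\<close>.\<close>
  define G where "G a = (\<integral>z'. h (merge A (I - A) (x, merge (R - R') (I - R) (a, z'))) \<partial>PiM (I - R) M)"
    for a
  interpret C: prob_space "PiM (I - R) M" by (rule prob_space_PiM')
  have "merge (R - R') (I - R) \<in> measurable (PiM (R - R') M \<Otimes>\<^sub>M PiM (I - R) M) (PiM (I - A) M)"
    using measurable_merge[of "R - R'" "I - R" M] U by simp
  moreover have "restrict x A \<in> space (PiM A M)"
    using elim(2) A by (auto simp: space_PiM)
  ultimately have "(\<lambda>p. h (merge A (I - A) (restrict x A, merge (R - R') (I - R) p)))
      \<in> borel_measurable (PiM (R - R') M \<Otimes>\<^sub>M PiM (I - R) M)"
    using measurable_merge_compl[OF A] by measurable
  then have G: "G \<in> borel_measurable (PiM (R - R') M)"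
    unfolding G_def by (intro C.borel_measurable_lebesgue_integral) (simp add: case_prod_beta')
  have "coord_cond_exp R' (coord_cond_exp R h) x
      = (\<integral>z. G (restrict z (R - R')) \<partial>PiM (I - R') M)"
    using R R' by (simp add: coord_cond_exp_def G_def A_def merge_merge_Int)
  also have "\<dots> = (\<integral>a. G a \<partial>PiM (R - R') M)"
  proof -
    have sub: "R - R' \<subseteq> I - R'" using R by auto
    show ?thesis
      using integral_distr[OF measurable_restrict_subset[OF sub] G]
        distr_restrict[OF sub finite_Diff[OF finite_index]]
      by simp
  qed
  also have "\<dots> = (\<integral>w. h (merge A (I - A) (x, w)) \<partial>PiM (I - A) M)"
  proof -
    have "finite (R - R')" "finite (I - R)"
      using finite_index R by (auto intro: finite_subset)
    then show ?thesis
      using product_integral_fold[OF D, of "\<lambda>w. h (merge A (I - A) (x, w))"] elim(1) U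
      by (simp add: G_def A_def)
  qed
  finally show ?case
    by (simp add: coord_cond_exp_def A_def)
qed

lemma coord_cond_exp_index: "x \<in> space (PiM I M) \<Longrightarrow> coord_cond_exp I f x = f x"
proof -
  assume "x \<in> space (PiM I M)"
  then have "merge I {} (x, z) = x" for z
    by (auto simp: merge_def fun_eq_iff space_PiM PiE_def extensional_def)
  then show ?thesis
    by (simp add: coord_cond_exp_def PiM_empty lebesgue_integral_count_space_finite)
qed

lemma coord_cond_exp_empty: "coord_cond_exp {} f x = integral\<^sup>L (PiM I M) f"
proof -
  have "coord_cond_exp {} f x = (\<integral>z. f (restrict z I) \<partial>PiM I M)"
    by (simp add: coord_cond_exp_def merge_def restrict_def)
  also have "\<dots> = integral\<^sup>L (PiM I M) f"
    by (intro Bochner_Integration.integral_cong refl arg_cong[where f = f])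
      (auto simp: space_PiM PiE_def extensional_def restrict_def fun_eq_iff)
  finally show ?thesis .
qed

lemma integral_coord_cond_exp_mult:
  fixes f g :: "_ \<Rightarrow> real"
  assumes B: "B \<subseteq> I"
    and f[measurable]: "f \<in> borel_measurable (PiM I M)" and g[measurable]: "g \<in> borel_measurable (PiM I M)"
    and f2: "integrable (PiM I M) (\<lambda>x. f x ^ 2)" and g2: "integrable (PiM I M) (\<lambda>x. g x ^ 2)"
  shows "(\<integral>x. coord_cond_exp B f x * g x \<partial>PiM I M)
    = (\<integral>x. coord_cond_exp B f x * coord_cond_exp B g x \<partial>PiM I M)"
proof -
  have "integrable (PiM I M) (\<lambda>x. coord_cond_exp B f x * g x)"
    using square_integrable_coord_cond_exp[OF B f] f2
    by (intro integrable_mult_of_square_integrable g g2 borel_measurable_coord_cond_exp[OF B f]) simp_all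
  then have "(\<integral>x. coord_cond_exp B f x * g x \<partial>PiM I M)
      = (\<integral>x. coord_cond_exp B (\<lambda>y. coord_cond_exp B f y * g y) x \<partial>PiM B M)"
    by (rule integral_coord_cond_exp_PiM[OF B])
  also have "\<dots> = (\<integral>x. coord_cond_exp B f x * coord_cond_exp B g x \<partial>PiM B M)"
    by (simp add: coord_cond_exp_def[of B "\<lambda>y. coord_cond_exp B f y * g y"] coord_cond_exp_merge)
      (simp add: coord_cond_exp_def)
  also have "\<dots> = (\<integral>x. coord_cond_exp B f (restrict x B) * coord_cond_exp B g (restrict x B) \<partial>PiM I M)"
    using measurable_coord_cond_exp_PiM[OF B f] measurable_coord_cond_exp_PiM[OF B g]
    by (subst integral_distr[OF measurable_restrict_subset[OF B], symmetric])
      (simp_all add: distr_restrict_PiM[OF B])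
  finally show ?thesis
    by (simp add: coord_cond_exp_restrict)
qed

lemma integral_coord_cond_exp_mult_coord_cond_exp:
  fixes h :: "_ \<Rightarrow> real"
  assumes R: "R \<subseteq> I" and R': "R' \<subseteq> I"
    and h[measurable]: "h \<in> borel_measurable (PiM I M)" and h2: "integrable (PiM I M) (\<lambda>x. h x ^ 2)"
  shows "(\<integral>x. coord_cond_exp R h x * coord_cond_exp R' h x \<partial>PiM I M)
    = (\<integral>x. coord_cond_exp (R \<inter> R') h x ^ 2 \<partial>PiM I M)"
proof -
  define A where "A = R \<inter> R'"
  have A: "A \<subseteq> I" using R by (auto simp: A_def)
  have hi: "integrable (PiM I M) h" by (rule P.square_integrable_imp_integrable[OF h h2])
  have [measurable]: "coord_cond_exp R h \<in> borel_measurable (PiM I M)"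
    "coord_cond_exp R' h \<in> borel_measurable (PiM I M)" "coord_cond_exp A h \<in> borel_measurable (PiM I M)"
    using R R' A by (simp_all add: borel_measurable_coord_cond_exp)
  have [measurable]: "coord_cond_exp R' (coord_cond_exp R h) \<in> borel_measurable (PiM I M)"
    "coord_cond_exp A (coord_cond_exp R' h) \<in> borel_measurable (PiM I M)"
    using R' A by (simp_all add: borel_measurable_coord_cond_exp)
  have L2: "integrable (PiM I M) (\<lambda>x. coord_cond_exp B h x ^ 2)" if "B \<subseteq> I" for B
    using square_integrable_coord_cond_exp[OF that h] h2 by simp
  have "(\<integral>x. coord_cond_exp R h x * coord_cond_exp R' h x \<partial>PiM I M)
      = (\<integral>x. coord_cond_exp R' h x * coord_cond_exp R' (coord_cond_exp R h) x \<partial>PiM I M)"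
    using integral_coord_cond_exp_mult[OF R' h _ h2 L2[OF R]] by (simp add: mult.commute)
  also have "\<dots> = (\<integral>x. coord_cond_exp A h x * coord_cond_exp R' h x \<partial>PiM I M)"
  proof (rule integral_cong_AE)
    show "AE x in PiM I M. coord_cond_exp R' h x * coord_cond_exp R' (coord_cond_exp R h) x
        = coord_cond_exp A h x * coord_cond_exp R' h x"
      using coord_cond_exp_coord_cond_exp[OF R R' hi] by eventually_elim (simp add: A_def)
  qed measurable
  also have "\<dots> = (\<integral>x. coord_cond_exp A h x * coord_cond_exp A (coord_cond_exp R' h) x \<partial>PiM I M)"
    using integral_coord_cond_exp_mult[OF A h _ h2 L2[OF R']] by simp
  also have "\<dots> = (\<integral>x. coord_cond_exp A h x ^ 2 \<partial>PiM I M)"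
  proof (rule integral_cong_AE)
    show "AE x in PiM I M. coord_cond_exp A h x * coord_cond_exp A (coord_cond_exp R' h) x
        = coord_cond_exp A h x ^ 2"
      using coord_cond_exp_coord_cond_exp[OF R' A hi]
      by eventually_elim (simp add: A_def Int_absorb1 power2_eq_square)
  qed measurable
  finally show ?thesis by (simp add: A_def)
qed

lemma set_moebius_coord_cond_exp_square_nonneg:
  fixes h :: "_ \<Rightarrow> real" and blk :: "'s set \<Rightarrow> 'a set"
  assumes T: "finite T"
    and blk: "\<And>R. R \<subseteq> T \<Longrightarrow> blk R \<subseteq> I"
    and blk_inter: "\<And>R R'. R \<subseteq> T \<Longrightarrow> R' \<subseteq> T \<Longrightarrow> blk (R \<inter> R') = blk R \<inter> blk R'"
    and h[measurable]: "h \<in> borel_measurable (PiM I M)" and h2: "integrable (PiM I M) (\<lambda>x. h x ^ 2)"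
  shows "set_moebius (\<lambda>R. \<integral>x. coord_cond_exp (blk R) h x ^ 2 \<partial>PiM I M) T \<ge> 0"
proof -
  define s where "s R = (-1::real) ^ card (T - R)" for R
  define v where "v R = coord_cond_exp (blk R) h" for R
  have [measurable]: "v R \<in> borel_measurable (PiM I M)" if "R \<in> Pow T" for R
    using that blk by (simp add: v_def borel_measurable_coord_cond_exp)
  have "integrable (PiM I M) (\<lambda>x. v R x ^ 2)" if "R \<in> Pow T" for R
    using square_integrable_coord_cond_exp[OF blk h] that h2 by (simp add: v_def)
  then have products: "integrable (PiM I M) (\<lambda>x. s R * s R' * (v R x * v R' x))"
    if "R \<in> Pow T" "R' \<in> Pow T" for R R'
    using that by (intro integrable_mult_right integrable_mult_of_square_integrable) simp_all
  have "set_moebius (\<lambda>R. \<integral>x. v R x ^ 2 \<partial>PiM I M) T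
      = (\<Sum>R\<in>Pow T. \<Sum>R'\<in>Pow T. s R * s R' * (\<integral>x. v (R \<inter> R') x ^ 2 \<partial>PiM I M))"
    by (simp add: set_moebius_eq_double_sum_inter[OF T] s_def)
  also have "\<dots> = (\<Sum>R\<in>Pow T. \<Sum>R'\<in>Pow T. s R * s R' * (\<integral>x. v R x * v R' x \<partial>PiM I M))"
  proof (intro sum.cong refl)
    fix R R' assume "R \<in> Pow T" "R' \<in> Pow T"
    then show "s R * s R' * (\<integral>x. v (R \<inter> R') x ^ 2 \<partial>PiM I M) = s R * s R' * (\<integral>x. v R x * v R' x \<partial>PiM I M)"
      using integral_coord_cond_exp_mult_coord_cond_exp[OF blk blk h h2, of R R'] blk_inter[of R R']
      by (simp add: v_def)
  qed
  also have "\<dots> = (\<integral>x. (\<Sum>R\<in>Pow T. \<Sum>R'\<in>Pow T. s R * s R' * (v R x * v R' x)) \<partial>PiM I M)"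
    using products
    by (subst Bochner_Integration.integral_sum)
      (auto intro!: Bochner_Integration.integrable_sum simp: Bochner_Integration.integral_sum)
  also have "\<dots> = (\<integral>x. (\<Sum>R\<in>Pow T. s R * v R x) ^ 2 \<partial>PiM I M)"
    by (simp add: power2_eq_square sum_product mult_ac)
  finally show ?thesis
    by (simp add: v_def)
qed

lemma variance_coord_cond_exp:
  fixes h :: "_ \<Rightarrow> real"
  assumes B: "B \<subseteq> I"
    and h[measurable]: "h \<in> borel_measurable (PiM I M)" and h2: "integrable (PiM I M) (\<lambda>x. h x ^ 2)"
  shows "(\<integral>x. (coord_cond_exp B h x - integral\<^sup>L (PiM I M) h) ^ 2 \<partial>PiM I M)
    = (\<integral>x. coord_cond_exp B h x ^ 2 \<partial>PiM I M) - integral\<^sup>L (PiM I M) h ^ 2"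
proof -
  define c where "c = integral\<^sup>L (PiM I M) h"
  define E where "E = coord_cond_exp B h"
  have measurable_E: "E \<in> borel_measurable (PiM I M)"
    unfolding E_def by (rule borel_measurable_coord_cond_exp[OF B h])
  have square: "integrable (PiM I M) (\<lambda>x. E x ^ 2)"
    unfolding E_def using square_integrable_coord_cond_exp[OF B h] h2 by simp
  have E: "integrable (PiM I M) E"
    by (rule P.square_integrable_imp_integrable[OF measurable_E square])
  have mean: "(\<integral>x. E x \<partial>PiM I M) = c"
    unfolding E_def c_def by (rule integral_coord_cond_exp[OF B P.square_integrable_imp_integrable[OF h h2]])
  have "(\<integral>x. (E x - c) ^ 2 \<partial>PiM I M) = (\<integral>x. E x ^ 2 + c ^ 2 - 2 * E x * c \<partial>PiM I M)"
    by (intro Bochner_Integration.integral_cong refl) (simp add: power2_diff)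
  also have "\<dots> = (\<integral>x. E x ^ 2 \<partial>PiM I M) - 2 * c * (\<integral>x. E x \<partial>PiM I M) + c ^ 2"
    using square E by (simp add: P.prob_space)
  finally show ?thesis
    unfolding mean by (simp add: power2_eq_square E_def c_def)
qed

text \<open>A variance-drop inequality of Hoeffding type; \<open>blk R\<close> is the set of coordinates belonging
  to the groups in \<open>R\<close>.\<close>
lemma sum_variance_coord_cond_exp_le:
  fixes h :: "_ \<Rightarrow> real" and blk :: "'s set \<Rightarrow> 'a set"
  assumes G: "finite G" and m: "1 \<le> m"
    and blk: "\<And>R. R \<subseteq> G \<Longrightarrow> blk R \<subseteq> I"
    and blk_inter: "\<And>R R'. R \<subseteq> G \<Longrightarrow> R' \<subseteq> G \<Longrightarrow> blk (R \<inter> R') = blk R \<inter> blk R'"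
    and blk_G: "blk G = I" and blk_empty: "blk {} = {}"
    and h[measurable]: "h \<in> borel_measurable (PiM I M)" and h2: "integrable (PiM I M) (\<lambda>x. h x ^ 2)"
  shows "(\<Sum>S\<in>{S. S \<subseteq> G \<and> card S = m}.
      \<integral>x. (coord_cond_exp (blk S) h x - integral\<^sup>L (PiM I M) h) ^ 2 \<partial>PiM I M)
    \<le> real ((card G - 1) choose (m - 1)) * (\<integral>x. (h x - integral\<^sup>L (PiM I M) h) ^ 2 \<partial>PiM I M)"
proof -
  define \<psi> where "\<psi> R = (\<integral>x. coord_cond_exp (blk R) h x ^ 2 \<partial>PiM I M)" for R
  have psi_empty: "\<psi> {} = integral\<^sup>L (PiM I M) h ^ 2"
    by (simp add: \<psi>_def blk_empty coord_cond_exp_empty P.prob_space)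
  have variance: "(\<integral>x. (coord_cond_exp (blk S) h x - integral\<^sup>L (PiM I M) h) ^ 2 \<partial>PiM I M)
      = \<psi> S - \<psi> {}" if "S \<subseteq> G" for S
    unfolding psi_empty unfolding \<psi>_def by (rule variance_coord_cond_exp[OF blk[OF that] h h2])
  have nonneg: "set_moebius \<psi> T \<ge> 0" if "T \<subseteq> G" for T
    unfolding \<psi>_def
  proof (rule set_moebius_coord_cond_exp_square_nonneg[OF finite_subset[OF that G] _ _ h h2])
    fix R R' assume "R \<subseteq> T" "R' \<subseteq> T"
    with \<open>T \<subseteq> G\<close> show "blk R \<subseteq> I" "blk (R \<inter> R') = blk R \<inter> blk R'"
      by (meson blk blk_inter subset_trans)+
  qed
  have "(\<integral>x. (h x - integral\<^sup>L (PiM I M) h) ^ 2 \<partial>PiM I M)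
      = (\<integral>x. (coord_cond_exp (blk G) h x - integral\<^sup>L (PiM I M) h) ^ 2 \<partial>PiM I M)"
    by (rule Bochner_Integration.integral_cong) (simp_all add: blk_G coord_cond_exp_index)
  then have total: "(\<integral>x. (h x - integral\<^sup>L (PiM I M) h) ^ 2 \<partial>PiM I M) = \<psi> G - \<psi> {}"
    using variance[OF order_refl] by simp
  have "(\<Sum>S\<in>{S. S \<subseteq> G \<and> card S = m}.
      \<integral>x. (coord_cond_exp (blk S) h x - integral\<^sup>L (PiM I M) h) ^ 2 \<partial>PiM I M)
    = (\<Sum>S\<in>{S. S \<subseteq> G \<and> card S = m}. \<psi> S - \<psi> {})"
    by (rule sum.cong) (simp_all add: variance)
  also have "\<dots> \<le> real ((card G - 1) choose (m - 1)) * (\<psi> G - \<psi> {})"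
    by (rule sum_subsets_card_le_binomial[OF G m]) (rule nonneg)
  finally show ?thesis
    by (simp only: total)
qed

lemma AE_coord_cond_exp_inner:
  fixes f :: "_ \<Rightarrow> 'c::{real_inner,banach,second_countable_topology}"
  assumes B: "B \<subseteq> I" and f: "integrable (PiM I M) f"
  shows "AE x in PiM I M. coord_cond_exp B (\<lambda>y. u \<bullet> f y) x = u \<bullet> coord_cond_exp B f x"
  using AE_integrable_merge[OF B f] by eventually_elim (simp add: coord_cond_exp_def)

end

section \<open>Samples from convolutions\<close>

lemma cov_form_distr:
  fixes t :: "'b \<Rightarrow> 'a::euclidean_space"
  assumes [measurable]: "X \<in> measurable M N" "t \<in> borel_measurable N"
  shows "cov_form (distr M N X) t u = (\<integral>x. (u \<bullet> t (X x) - (\<integral>y. u \<bullet> t (X y) \<partial>M)) ^ 2 \<partial>M)"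
  unfolding cov_form_def by (simp add: integral_distr)

lemma has_2nd_distr:
  fixes t :: "'b \<Rightarrow> 'a::euclidean_space"
  assumes [measurable]: "X \<in> measurable M N" "t \<in> borel_measurable N"
  shows "has_2nd (distr M N X) t \<longleftrightarrow> integrable M (\<lambda>x. norm (t (X x)) ^ 2)"
  unfolding has_2nd_def by (simp add: integrable_distr_eq)

text \<open>The coordinate \<open>\<omega> (i, j)\<close> of the noise is the \<open>i\<close>-th summand of the \<open>j\<close>-th observation, so
  that \<open>\<theta> + \<Sum>i\<in>S. \<omega> (i, j)\<close>, \<open>j < n\<close>, is a sample of size \<open>n\<close> from \<open>conv_set F S\<close>.  Indices
  outside \<open>I\<close> carry a dummy point mass, making \<open>noise\<close> a probability measure everywhere.\<close>
locale convolution_sample =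
  fixes F :: "nat \<Rightarrow> 'a::euclidean_space measure" and I :: "nat set" and n :: nat
  assumes finite_I: "finite I" and I_nonempty: "I \<noteq> {}" and n_pos: "0 < n"
    and prob_space_F: "\<And>i. i \<in> I \<Longrightarrow> prob_space (F i)"
    and sets_F: "\<And>i. i \<in> I \<Longrightarrow> sets (F i) = sets borel"
begin

definition noise :: "nat \<times> nat \<Rightarrow> 'a measure" where
  "noise p = (if fst p \<in> I then F (fst p) else return borel 0)"

lemma prob_space_noise: "prob_space (noise p)"
  by (simp add: noise_def prob_space_F prob_space_return)

lemma sets_noise [measurable_cong]: "sets (noise p) = sets borel"
  by (simp add: noise_def sets_F)

sublocale noise: finite_product_prob_space noise "I \<times> {..<n}"
proof -
  interpret product_prob_space noise "I \<times> {..<n}"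
    by (rule product_prob_spaceI) (rule prob_space_noise)
  show "finite_product_prob_space noise (I \<times> {..<n})"
    by unfold_locales (simp add: finite_I)
qed

definition sum_sample :: "nat set \<Rightarrow> 'a \<Rightarrow> (nat \<times> nat \<Rightarrow> 'a) \<Rightarrow> nat \<Rightarrow> 'a" where
  "sum_sample S \<theta> \<omega> = (\<lambda>j\<in>{..<n}. (\<Sum>i\<in>S. \<omega> (i, j)) + \<theta>)"

lemma measurable_sum_sample [measurable]:
  assumes "S \<subseteq> I"
  shows "sum_sample S \<theta> \<in> measurable (PiM (I \<times> {..<n}) noise) (PiM {..<n} (\<lambda>_. borel))"
  unfolding sum_sample_def by measurable (use assms in auto)

lemma indep_vars_noise: "noise.P.indep_vars noise (\<lambda>p \<omega>. \<omega> p) (I \<times> {..<n})"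
proof (subst noise.P.indep_vars_iff_distr_eq_PiM')
  show "I \<times> {..<n} \<noteq> {}" using I_nonempty n_pos by auto
  have "distr (PiM (I \<times> {..<n}) noise) (PiM (I \<times> {..<n}) noise) (\<lambda>x. \<lambda>p\<in>I \<times> {..<n}. x p)
      = PiM (I \<times> {..<n}) noise"
    using noise.distr_restrict[of "I \<times> {..<n}" "I \<times> {..<n}"] noise.finite_index by simp
  also have "\<dots> = PiM (I \<times> {..<n}) (\<lambda>p. distr (PiM (I \<times> {..<n}) noise) (noise p) (\<lambda>\<omega>. \<omega> p))"
    by (intro PiM_cong refl noise.PiM_component[symmetric])
  finally show "distr (PiM (I \<times> {..<n}) noise) (PiM (I \<times> {..<n}) noise) (\<lambda>x. \<lambda>p\<in>I \<times> {..<n}. x p)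
      = PiM (I \<times> {..<n}) (\<lambda>p. distr (PiM (I \<times> {..<n}) noise) (noise p) (\<lambda>\<omega>. \<omega> p))" .
qed simp

lemma indep_vars_sum_sample:
  assumes S: "S \<subseteq> I"
  shows "noise.P.indep_vars (\<lambda>_. borel) (\<lambda>j \<omega>. (\<Sum>i\<in>S. \<omega> (i, j)) + \<theta>) {..<n}"
proof -
  have "noise.P.indep_vars (\<lambda>j. PiM (S \<times> {j}) noise) (\<lambda>j \<omega>. restrict (\<lambda>p. \<omega> p) (S \<times> {j})) {..<n}"
    using S by (intro noise.P.indep_vars_restrict[OF indep_vars_noise]) (auto simp: disjoint_family_on_def)
  moreover have "(\<lambda>v. (\<Sum>i\<in>S. v (i, j)) + \<theta>) \<in> borel_measurable (PiM (S \<times> {j}) noise)" for j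
    by measurable
  ultimately have "noise.P.indep_vars (\<lambda>_. borel)
      (\<lambda>j \<omega>. (\<Sum>i\<in>S. restrict (\<lambda>p. \<omega> p) (S \<times> {j}) (i, j)) + \<theta>) {..<n}"
    by (rule noise.P.indep_vars_compose2)
  then show ?thesis
    by (simp cong: sum.cong)
qed

lemma sets_PiM_F: "S \<subseteq> I \<Longrightarrow> sets (PiM S F) = sets (PiM S (\<lambda>_. borel))"
  by (intro sets_PiM_cong) (auto simp: sets_F)

lemma distr_row_sum:
  assumes S: "S \<subseteq> I" and j: "j < n"
  shows "distr (PiM (I \<times> {..<n}) noise) borel (\<lambda>\<omega>. (\<Sum>i\<in>S. \<omega> (i, j)) + \<theta>)
    = distr (conv_set F S) borel (\<lambda>x. x + \<theta>)"
proof -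
  have F: "PiM S (\<lambda>i. noise (i, j)) = PiM S F"
    using S by (intro PiM_cong) (auto simp: noise_def)
  have row: "distr (PiM (I \<times> {..<n}) noise) (PiM S F) (\<lambda>\<omega>. \<lambda>i\<in>S. \<omega> (i, j)) = PiM S F"
    using distr_PiM_reindex[of "I \<times> {..<n}" noise "\<lambda>i. (i, j)" S] S j
    by (simp add: F prob_space_noise inj_on_def subset_eq)
  have [measurable]: "(\<lambda>\<omega>. \<lambda>i\<in>S. \<omega> (i, j)) \<in> measurable (PiM (I \<times> {..<n}) noise) (PiM S F)"
    unfolding F[symmetric] using S j by (intro measurable_restrict measurable_component_singleton) auto
  have "(\<lambda>x. \<Sum>i\<in>S. x i :: 'a) \<in> borel_measurable (PiM S (\<lambda>_. borel))"
    by measurable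
  then have [measurable]: "(\<lambda>x. \<Sum>i\<in>S. x i) \<in> borel_measurable (PiM S F)"
    by (simp add: measurable_cong_sets[OF sets_PiM_F[OF S] refl])
  have "distr (PiM (I \<times> {..<n}) noise) borel (\<lambda>\<omega>. (\<Sum>i\<in>S. \<omega> (i, j)) + \<theta>)
      = distr (distr (PiM (I \<times> {..<n}) noise) (PiM S F) (\<lambda>\<omega>. \<lambda>i\<in>S. \<omega> (i, j))) borel
          (\<lambda>x. (\<Sum>i\<in>S. x i) + \<theta>)"
    by (subst distr_distr) (simp_all add: comp_def)
  also have "\<dots> = distr (conv_set F S) borel (\<lambda>x. x + \<theta>)"
    unfolding row conv_set_def by (subst distr_distr) (simp_all add: comp_def)
  finally show ?thesis .
qed

lemma distr_sum_sample:
  assumes S: "S \<subseteq> I"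
  shows "distr (PiM (I \<times> {..<n}) noise) (PiM {..<n} (\<lambda>_. borel)) (sum_sample S \<theta>)
    = sample_law (conv_set F S) n \<theta>"
proof -
  have rows: "(\<lambda>\<omega>. (\<Sum>i\<in>S. \<omega> (i, j)) + \<theta>) \<in> borel_measurable (PiM (I \<times> {..<n}) noise)"
    if "j < n" for j
    by measurable (use S that in auto)
  have "distr (PiM (I \<times> {..<n}) noise) (PiM {..<n} (\<lambda>_. borel)) (sum_sample S \<theta>)
      = PiM {..<n} (\<lambda>j. distr (PiM (I \<times> {..<n}) noise) borel (\<lambda>\<omega>. (\<Sum>i\<in>S. \<omega> (i, j)) + \<theta>))"
    unfolding sum_sample_def
    using noise.P.indep_vars_iff_distr_eq_PiM'[of "{..<n}"
        "\<lambda>j \<omega>. (\<Sum>i\<in>S. \<omega> (i, j)) + \<theta>" "\<lambda>_. borel"] indep_vars_sum_sample[OF S, of \<theta>] n_pos rows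
    by (simp add: lessThan_empty_iff)
  also have "\<dots> = PiM {..<n} (\<lambda>_. distr (conv_set F S) borel (\<lambda>x. x + \<theta>))"
    by (intro PiM_cong refl distr_row_sum[OF S]) simp
  finally show ?thesis
    by (simp add: sample_law_def)
qed

lemma has_2nd_sample_law_iff:
  assumes "S \<subseteq> I" and [measurable]: "t \<in> borel_measurable (PiM {..<n} (\<lambda>_. borel))"
  shows "has_2nd (sample_law (conv_set F S) n \<theta>) t
    \<longleftrightarrow> integrable (PiM (I \<times> {..<n}) noise) (\<lambda>\<omega>. norm (t (sum_sample S \<theta> \<omega>)) ^ 2)"
  using assms by (simp add: distr_sum_sample[symmetric] has_2nd_distr)

lemma cov_form_sample_law:
  assumes "S \<subseteq> I" and [measurable]: "t \<in> borel_measurable (PiM {..<n} (\<lambda>_. borel))"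
  shows "cov_form (sample_law (conv_set F S) n \<theta>) t u
    = (\<integral>\<omega>. (u \<bullet> t (sum_sample S \<theta> \<omega>) - (\<integral>\<omega>. u \<bullet> t (sum_sample S \<theta> \<omega>) \<partial>PiM (I \<times> {..<n}) noise)) ^ 2
        \<partial>PiM (I \<times> {..<n}) noise)"
  using assms by (simp add: distr_sum_sample[symmetric] cov_form_distr)

definition completed_estimate ::
    "nat set \<Rightarrow> ((nat \<Rightarrow> 'a) \<Rightarrow> 'a) \<Rightarrow> (nat \<Rightarrow> 'a) \<Rightarrow> (nat \<times> nat \<Rightarrow> 'a) \<Rightarrow> 'a" where
  "completed_estimate S t w z = t (\<lambda>j\<in>{..<n}. w j + (\<Sum>i\<in>I - S. z (i, j)))"

text \<open>Averaging \<open>t\<close> over the summands with index outside \<open>S\<close> turns it into an estimator for a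
  sample from \<open>conv_set F S\<close>; where the average does not exist, the sample mean is an
  equivariant placeholder.\<close>
definition averaged_estimator :: "nat set \<Rightarrow> ((nat \<Rightarrow> 'a) \<Rightarrow> 'a) \<Rightarrow> (nat \<Rightarrow> 'a) \<Rightarrow> 'a" where
  "averaged_estimator S t w =
    (if integrable (PiM ((I - S) \<times> {..<n}) noise) (completed_estimate S t w)
     then \<integral>z. completed_estimate S t w z \<partial>PiM ((I - S) \<times> {..<n}) noise
     else (1 / real n) *\<^sub>R (\<Sum>j<n. w j))"

lemma measurable_completed_estimate:
  assumes [measurable]: "t \<in> borel_measurable (PiM {..<n} (\<lambda>_. borel))"
  shows "(\<lambda>p. completed_estimate S t (fst p) (snd p))
    \<in> borel_measurable (PiM {..<n} (\<lambda>_. borel) \<Otimes>\<^sub>M PiM ((I - S) \<times> {..<n}) noise)"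
  unfolding completed_estimate_def by measurable

lemma borel_measurable_averaged_estimator:
  assumes t: "t \<in> borel_measurable (PiM {..<n} (\<lambda>_. borel))"
  shows "averaged_estimator S t \<in> borel_measurable (PiM {..<n} (\<lambda>_. borel))"
proof -
  let ?W = "PiM {..<n} (\<lambda>_. borel) :: (nat \<Rightarrow> 'a) measure"
  let ?Z = "PiM ((I - S) \<times> {..<n}) noise"
  interpret Z: prob_space ?Z by (rule noise.prob_space_PiM')
  have joint: "(\<lambda>p. completed_estimate S t (fst p) (snd p)) \<in> borel_measurable (?W \<Otimes>\<^sub>M ?Z)"
    by (rule measurable_completed_estimate[OF t])
  then have "(\<lambda>w. \<integral>\<^sup>+z. ennreal (norm (completed_estimate S t w z)) \<partial>?Z) \<in> borel_measurable ?W"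
    by (intro Z.borel_measurable_nn_integral)
      (simp add: case_prod_beta' measurable_compose[OF measurable_compose[OF joint borel_measurable_norm] measurable_ennreal])
  then have "{w \<in> space ?W. (\<integral>\<^sup>+z. ennreal (norm (completed_estimate S t w z)) \<partial>?Z) < \<infinity>} \<in> sets ?W"
    by measurable
  moreover have "completed_estimate S t w \<in> borel_measurable ?Z" if "w \<in> space ?W" for w
    using measurable_Pair2[OF joint that] by simp
  then have "{w \<in> space ?W. integrable ?Z (completed_estimate S t w)}
      = {w \<in> space ?W. (\<integral>\<^sup>+z. ennreal (norm (completed_estimate S t w z)) \<partial>?Z) < \<infinity>}"
    by (auto simp: integrable_iff_bounded)
  ultimately have integrable: "{w \<in> space ?W. integrable ?Z (completed_estimate S t w)} \<in> sets ?W"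
    by simp
  have "(\<lambda>w. \<integral>z. completed_estimate S t w z \<partial>?Z) \<in> borel_measurable ?W"
    using joint by (intro Z.borel_measurable_lebesgue_integral) (simp add: case_prod_beta')
  moreover have "(\<lambda>w. (1 / real n) *\<^sub>R (\<Sum>j<n. w j)) \<in> borel_measurable ?W"
    by (intro borel_measurable_scaleR borel_measurable_sum measurable_component_singleton
        measurable_const) auto
  ultimately show ?thesis
    unfolding averaged_estimator_def[abs_def] by (rule measurable_If[OF _ _ integrable])
qed

lemma equivariant_averaged_estimator:
  assumes t: "equivariant n t"
  shows "equivariant n (averaged_estimator S t)"
  unfolding equivariant_def
proof safe
  show "averaged_estimator S t \<in> borel_measurable (PiM {..<n} (\<lambda>_. borel))"
    using t by (simp add: equivariant_def borel_measurable_averaged_estimator)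
  fix w :: "nat \<Rightarrow> 'a" and c assume w: "w \<in> extensional {..<n}"
  let ?Z = "PiM ((I - S) \<times> {..<n}) noise"
  interpret Z: prob_space ?Z by (rule noise.prob_space_PiM')
  define w' where "w' = restrict (\<lambda>i. w i + c) {..<n}"
  have shift: "completed_estimate S t w' = (\<lambda>z. completed_estimate S t w z + c)"
  proof
    fix z
    define x where "x = (\<lambda>j\<in>{..<n}. w j + (\<Sum>i\<in>I - S. z (i, j)))"
    have "restrict (\<lambda>j. x j + c) {..<n} = (\<lambda>j\<in>{..<n}. w' j + (\<Sum>i\<in>I - S. z (i, j)))"
      by (auto simp: x_def w'_def fun_eq_iff algebra_simps)
    moreover have "x \<in> extensional {..<n}"
      by (simp add: x_def)
    then have "t (restrict (\<lambda>j. x j + c) {..<n}) = t x + c"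
      using t by (simp add: equivariant_def)
    ultimately show "completed_estimate S t w' z = completed_estimate S t w z + c"
      by (simp add: completed_estimate_def x_def)
  qed
  have "(\<Sum>j<n. w' j) = (\<Sum>j<n. w j) + real n *\<^sub>R c"
    by (simp add: w'_def sum.distrib sum_constant_scaleR)
  then show "averaged_estimator S t w' = averaged_estimator S t w + c"
    using n_pos Z.prob_space
    by (auto simp: averaged_estimator_def shift integrable_add_const_iff[OF Z.finite_measure_axioms]
        scaleR_add_right)
qed

lemma completed_estimate_sum_sample:
  assumes S: "S \<subseteq> I"
  shows "completed_estimate S t (sum_sample S \<theta> \<omega>)
    = (\<lambda>z. t (sum_sample I \<theta> (merge (S \<times> {..<n}) ((I - S) \<times> {..<n}) (\<omega>, z))))"
proof -
  have "(\<Sum>i\<in>I. merge (S \<times> {..<n}) ((I - S) \<times> {..<n}) (\<omega>, z) (i, j))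
      = (\<Sum>i\<in>I - S. z (i, j)) + (\<Sum>i\<in>S. \<omega> (i, j))" if "j < n" for j z
    unfolding sum.subset_diff[OF S finite_I] using that
    by (intro arg_cong2[where f = "(+)"] sum.cong) (auto simp: merge_def)
  then show ?thesis
    unfolding completed_estimate_def sum_sample_def
    by (intro ext arg_cong[where f = t]) (auto simp: algebra_simps)
qed

lemma AE_averaged_estimator_sum_sample:
  assumes S: "S \<subseteq> I" and t: "t \<in> borel_measurable (PiM {..<n} (\<lambda>_. borel))"
    and t2: "integrable (PiM (I \<times> {..<n}) noise) (\<lambda>\<omega>. norm (t (sum_sample I \<theta> \<omega>)) ^ 2)"
  shows "AE \<omega> in PiM (I \<times> {..<n}) noise. averaged_estimator S t (sum_sample S \<theta> \<omega>)
    = noise.coord_cond_exp (S \<times> {..<n}) (\<lambda>\<omega>. t (sum_sample I \<theta> \<omega>)) \<omega>"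
proof -
  have "(\<lambda>\<omega>. t (sum_sample I \<theta> \<omega>)) \<in> borel_measurable (PiM (I \<times> {..<n}) noise)"
    using t by measurable
  then have integrable: "integrable (PiM (I \<times> {..<n}) noise) (\<lambda>\<omega>. t (sum_sample I \<theta> \<omega>))"
    using t2 by (rule noise.P.integrable_of_square_integrable_norm)
  have "S \<times> {..<n} \<subseteq> I \<times> {..<n}"
    using S by auto
  from noise.AE_integrable_merge[OF this integrable] show ?thesis
    by eventually_elim
      (simp add: averaged_estimator_def noise.coord_cond_exp_def completed_estimate_sum_sample[OF S]
        Times_Diff_distrib1[symmetric])
qed

lemma has_2nd_averaged_estimator:
  assumes S: "S \<subseteq> I" and t[measurable]: "t \<in> borel_measurable (PiM {..<n} (\<lambda>_. borel))"
    and t2: "has_2nd (sample_law (conv_set F I) n \<theta>) t"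
  shows "has_2nd (sample_law (conv_set F S) n \<theta>) (averaged_estimator S t)"
proof -
  have SJ: "S \<times> {..<n} \<subseteq> I \<times> {..<n}" using S by auto
  have [measurable]: "averaged_estimator S t \<in> borel_measurable (PiM {..<n} (\<lambda>_. borel))"
    by (rule borel_measurable_averaged_estimator[OF t])
  have [measurable]: "(\<lambda>\<omega>. t (sum_sample I \<theta> \<omega>)) \<in> borel_measurable (PiM (I \<times> {..<n}) noise)"
    by measurable
  have square: "integrable (PiM (I \<times> {..<n}) noise) (\<lambda>\<omega>. norm (t (sum_sample I \<theta> \<omega>)) ^ 2)"
    using t2 by (simp add: has_2nd_sample_law_iff)
  have [measurable]: "noise.coord_cond_exp (S \<times> {..<n}) (\<lambda>\<omega>. t (sum_sample I \<theta> \<omega>))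
      \<in> borel_measurable (PiM (I \<times> {..<n}) noise)"
    by (rule noise.borel_measurable_coord_cond_exp[OF SJ]) measurable
  have coord_square: "integrable (PiM (I \<times> {..<n}) noise)
      (\<lambda>\<omega>. norm (noise.coord_cond_exp (S \<times> {..<n}) (\<lambda>\<omega>. t (sum_sample I \<theta> \<omega>)) \<omega>) ^ 2)"
    by (rule noise.square_integrable_coord_cond_exp[OF SJ _ square]) measurable
  have AE_eq: "AE \<omega> in PiM (I \<times> {..<n}) noise.
      norm (noise.coord_cond_exp (S \<times> {..<n}) (\<lambda>\<omega>. t (sum_sample I \<theta> \<omega>)) \<omega>) ^ 2
      = norm (averaged_estimator S t (sum_sample S \<theta> \<omega>)) ^ 2"
    using AE_averaged_estimator_sum_sample[OF S t square] by eventually_elim simp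
  have "integrable (PiM (I \<times> {..<n}) noise)
      (\<lambda>\<omega>. norm (averaged_estimator S t (sum_sample S \<theta> \<omega>)) ^ 2)"
    by (rule integrable_cong_AE_imp[OF coord_square _ AE_eq]) (use S in measurable)
  then show ?thesis
    using S by (simp add: has_2nd_sample_law_iff)
qed

lemma cov_form_averaged_estimator:
  fixes u :: 'a
  assumes S: "S \<subseteq> I" and t[measurable]: "t \<in> borel_measurable (PiM {..<n} (\<lambda>_. borel))"
    and t2: "has_2nd (sample_law (conv_set F I) n \<theta>) t"
  defines "h \<equiv> \<lambda>\<omega>. u \<bullet> t (sum_sample I \<theta> \<omega>)"
  shows "cov_form (sample_law (conv_set F S) n \<theta>) (averaged_estimator S t) u
    = (\<integral>\<omega>. (noise.coord_cond_exp (S \<times> {..<n}) h \<omega> - integral\<^sup>L (PiM (I \<times> {..<n}) noise) h) ^ 2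
        \<partial>PiM (I \<times> {..<n}) noise)"
proof -
  let ?\<Omega> = "PiM (I \<times> {..<n}) noise"
  let ?E = "noise.coord_cond_exp (S \<times> {..<n}) h"
  have SJ: "S \<times> {..<n} \<subseteq> I \<times> {..<n}" using S by auto
  have averaged[measurable]: "averaged_estimator S t \<in> borel_measurable (PiM {..<n} (\<lambda>_. borel))"
    by (rule borel_measurable_averaged_estimator[OF t])
  have [measurable]: "(\<lambda>\<omega>. t (sum_sample I \<theta> \<omega>)) \<in> borel_measurable ?\<Omega>"
    by measurable
  have square: "integrable ?\<Omega> (\<lambda>\<omega>. norm (t (sum_sample I \<theta> \<omega>)) ^ 2)"
    using t2 by (simp add: has_2nd_sample_law_iff)
  have integrable: "integrable ?\<Omega> (\<lambda>\<omega>. t (sum_sample I \<theta> \<omega>))"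
    by (rule noise.P.integrable_of_square_integrable_norm[OF _ square]) measurable
  have [measurable]: "h \<in> borel_measurable ?\<Omega>"
    unfolding h_def by measurable
  have measurable_E: "?E \<in> borel_measurable ?\<Omega>"
    by (rule noise.borel_measurable_coord_cond_exp[OF SJ]) measurable
  have measurable_averaged:
    "(\<lambda>\<omega>. u \<bullet> averaged_estimator S t (sum_sample S \<theta> \<omega>)) \<in> borel_measurable ?\<Omega>"
    using S by measurable
  have AE_eq: "AE \<omega> in ?\<Omega>. u \<bullet> averaged_estimator S t (sum_sample S \<theta> \<omega>) = ?E \<omega>"
    using AE_averaged_estimator_sum_sample[OF S t square]
      noise.AE_coord_cond_exp_inner[OF SJ integrable, of u]
    by eventually_elim (simp add: h_def)
  have "(\<integral>\<omega>. u \<bullet> averaged_estimator S t (sum_sample S \<theta> \<omega>) \<partial>?\<Omega>) = (\<integral>\<omega>. ?E \<omega> \<partial>?\<Omega>)"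
    by (rule integral_cong_AE[OF measurable_averaged measurable_E AE_eq])
  also have "\<dots> = integral\<^sup>L ?\<Omega> h"
    unfolding h_def by (intro noise.integral_coord_cond_exp[OF SJ] integrable_inner_right integrable)
  finally have mean: "(\<integral>\<omega>. u \<bullet> averaged_estimator S t (sum_sample S \<theta> \<omega>) \<partial>?\<Omega>) = integral\<^sup>L ?\<Omega> h" .
  show ?thesis
    unfolding cov_form_sample_law[OF S averaged] mean
    using AE_eq
    by (intro integral_cong_AE borel_measurable_power borel_measurable_diff borel_measurable_const
        measurable_averaged measurable_E) (auto elim: eventually_mono)
qed

lemma sum_cov_form_pitman_le:
  assumes m: "1 \<le> m"
    and t: "is_pitman (conv_set F I) n t"
    and ts: "\<And>S. S \<subseteq> I \<Longrightarrow> card S = m \<Longrightarrow> is_pitman (conv_set F S) n (ts S)"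
  shows "(\<Sum>S\<in>{S. S \<subseteq> I \<and> card S = m}. cov_form (sample_law (conv_set F S) n \<theta>) (ts S) u)
    \<le> real ((card I - 1) choose (m - 1)) * cov_form (sample_law (conv_set F I) n \<theta>) t u"
proof -
  let ?\<Omega> = "PiM (I \<times> {..<n}) noise"
  define h where "h \<omega> = u \<bullet> t (sum_sample I \<theta> \<omega>)" for \<omega>
  have equivariant: "equivariant n t" and t2: "\<And>\<theta>. has_2nd (sample_law (conv_set F I) n \<theta>) t"
    using t by (auto simp: is_pitman_def)
  then have measurable_t[measurable]: "t \<in> borel_measurable (PiM {..<n} (\<lambda>_. borel))"
    by (simp add: equivariant_def)
  have [measurable]: "h \<in> borel_measurable ?\<Omega>"
    unfolding h_def by measurable
  have "integrable ?\<Omega> (\<lambda>\<omega>. norm (t (sum_sample I \<theta> \<omega>)) ^ 2)"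
    using t2[of \<theta>] by (simp add: has_2nd_sample_law_iff)
  then have h2: "integrable ?\<Omega> (\<lambda>\<omega>. h \<omega> ^ 2)"
    unfolding h_def by (rule square_integrable_inner[rotated]) measurable
  have "(\<Sum>S\<in>{S. S \<subseteq> I \<and> card S = m}. cov_form (sample_law (conv_set F S) n \<theta>) (ts S) u)
      \<le> (\<Sum>S\<in>{S. S \<subseteq> I \<and> card S = m}.
          cov_form (sample_law (conv_set F S) n \<theta>) (averaged_estimator S t) u)"
  proof (rule sum_mono)
    fix S assume "S \<in> {S. S \<subseteq> I \<and> card S = m}"
    then have S: "S \<subseteq> I" "card S = m" by auto
    have "\<forall>\<theta>. has_2nd (sample_law (conv_set F S) n \<theta>) (averaged_estimator S t)"
      using has_2nd_averaged_estimator[OF S(1) measurable_t t2] by blast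
    with equivariant_averaged_estimator[OF equivariant]
    show "cov_form (sample_law (conv_set F S) n \<theta>) (ts S) u
        \<le> cov_form (sample_law (conv_set F S) n \<theta>) (averaged_estimator S t) u"
      using ts[OF S] unfolding is_pitman_def by blast
  qed
  also have "\<dots> = (\<Sum>S\<in>{S. S \<subseteq> I \<and> card S = m}.
      \<integral>\<omega>. (noise.coord_cond_exp (S \<times> {..<n}) h \<omega> - integral\<^sup>L ?\<Omega> h) ^ 2 \<partial>?\<Omega>)"
    using t2 by (intro sum.cong refl) (auto simp: cov_form_averaged_estimator h_def[abs_def])
  also have "\<dots> \<le> real ((card I - 1) choose (m - 1)) * (\<integral>\<omega>. (h \<omega> - integral\<^sup>L ?\<Omega> h) ^ 2 \<partial>?\<Omega>)"
    by (rule noise.sum_variance_coord_cond_exp_le[OF finite_I m _ _ _ _ _ h2])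
      (auto simp: Times_Int_distrib1)
  also have "(\<integral>\<omega>. (h \<omega> - integral\<^sup>L ?\<Omega> h) ^ 2 \<partial>?\<Omega>) = cov_form (sample_law (conv_set F I) n \<theta>) t u"
    using cov_form_sample_law[OF order_refl, of t \<theta> u] by (simp add: h_def[abs_def])
  finally show ?thesis .
qed

end

theorem mainTheorem14:
  fixes F :: "nat \<Rightarrow> 'a::euclidean_space measure"
    and N n m :: nat
    and t :: "(nat \<Rightarrow> 'a) \<Rightarrow> 'a"
    and ts :: "nat set \<Rightarrow> (nat \<Rightarrow> 'a) \<Rightarrow> 'a"
    and \<theta> :: 'a
  assumes F: "\<And>i. i \<in> {1..N} \<Longrightarrow> distr_2nd (F i)"
    and n: "n \<ge> 1"
    and m: "1 \<le> m" "m \<le> N"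
    and t: "is_pitman (conv_set F {1..N}) n t"
    and ts: "\<And>S. S \<subseteq> {1..N} \<Longrightarrow> card S = m \<Longrightarrow> is_pitman (conv_set F S) n (ts S)"
  shows "\<forall>u. cov_form (sample_law (conv_set F {1..N}) n \<theta>) t u \<ge>
    (1 / real ((N - 1) choose (m - 1))) *
      (\<Sum>S\<in>{S. S \<subseteq> {1..N} \<and> card S = m}. cov_form (sample_law (conv_set F S) n \<theta>) (ts S) u)"
proof
  fix u
  have "prob_space (F i)" "sets (F i) = sets borel" if "i \<in> {1..N}" for i
    using F[OF that] unfolding distr_2nd_def by blast+
  then interpret convolution_sample F "{1..N}" n
    using m n by (intro convolution_sample.intro) simp_all
  have "0 < real ((N - 1) choose (m - 1))"
    using m by simp
  moreover have "(\<Sum>S\<in>{S. S \<subseteq> {1..N} \<and> card S = m}. cov_form (sample_law (conv_set F S) n \<theta>) (ts S) u)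
      \<le> real ((N - 1) choose (m - 1)) * cov_form (sample_law (conv_set F {1..N}) n \<theta>) t u"
    using sum_cov_form_pitman_le[OF m(1) t ts] by simp
  ultimately show "cov_form (sample_law (conv_set F {1..N}) n \<theta>) t u \<ge>
    (1 / real ((N - 1) choose (m - 1))) *
      (\<Sum>S\<in>{S. S \<subseteq> {1..N} \<and> card S = m}. cov_form (sample_law (conv_set F S) n \<theta>) (ts S) u)"
    by (simp add: field_simps)
qed

end
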